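(* Let $\Gamma$ be a metrized graph that is a tree with $v$ vertices, each edge of length $1$. Then $$W(\Gamma)=(v-1)^2+\#\big\{\{e_{i_1},e_{i_2},e_{i_3}\}\subset E(\Gamma):\ e_{i_1},e_{i_2},e_{i_3}\text{ all lie on some path in }\Gamma\big\},$$ and, when $v\ge 4$, this also equals $$(v-1)^2+\#\big\{S\subset E(\Gamma):\ \#S=v-4,\ \text{contracting the edges of }S\text{ yields the path graph }P_4\big\}.$$
   Context: A metrized graph is a finite connected graph each of whose edges is identified with a closed segment of positive length, with a finite vertex set $V(\Gamma)$ containing every point of valence $\neq 2$; $E(\Gamma)$ is its edge set and $v=\#V(\Gamma)$. The Wiener index is $W(\Gamma)=\frac12\sum_{p,q\in V(\Gamma)}d(p,q)$ with $d$ the path distance. Contracting an edge means shrinking it to a point (identifying its end points). $P_4$ denotes the path graph with $4$ vertices and $3$ edges in a line (here with unit edge lengths). A path in $\Gamma$ is a simple path of edges in the tree. *)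

theory Defs
  imports Complex_Main
begin

text \<open>A tree with unit edge lengths, given combinatorially: finite vertex set V,
  edges are 2-element subsets of V, connected, and #E = #V - 1.\<close>

definition is_walk :: "'a set set \<Rightarrow> 'a list \<Rightarrow> bool" where
  "is_walk E ps \<longleftrightarrow> ps \<noteq> [] \<and> (\<forall>i. Suc i < length ps \<longrightarrow> {ps ! i, ps ! Suc i} \<in> E)"

definition is_tree :: "'a set \<Rightarrow> 'a set set \<Rightarrow> bool" where
  "is_tree V E \<longleftrightarrow> finite V \<and> (\<forall>e\<in>E. e \<subseteq> V \<and> card e = 2)
     \<and> (\<forall>p\<in>V. \<forall>q\<in>V. \<exists>ps. is_walk E ps \<and> hd ps = p \<and> last ps = q)
     \<and> card E + 1 = card V"

definition tdist :: "'a set set \<Rightarrow> 'a \<Rightarrow> 'a \<Rightarrow> nat" where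
  "tdist E p q = (LEAST n. \<exists>ps. is_walk E ps \<and> hd ps = p \<and> last ps = q \<and> length ps = Suc n)"

definition wiener :: "'a set \<Rightarrow> 'a set set \<Rightarrow> real" where
  "wiener V E = (1/2) * (\<Sum>p\<in>V. \<Sum>q\<in>V. real (tdist E p q))"

definition simple_path :: "'a set set \<Rightarrow> 'a list \<Rightarrow> bool" where
  "simple_path E ps \<longleftrightarrow> is_walk E ps \<and> distinct ps"

definition path_edges :: "'a list \<Rightarrow> 'a set set" where
  "path_edges ps = {{ps ! i, ps ! Suc i} | i. Suc i < length ps}"

definition triples_on_path :: "'a set set \<Rightarrow> 'a set set set" where
  "triples_on_path E = {T. T \<subseteq> E \<and> card T = 3 \<and>
       (\<exists>ps. simple_path E ps \<and> T \<subseteq> path_edges ps)}"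

text \<open>Contraction of an edge set S: vertices become the classes of the equivalence
  relation generated by the edges of S; the remaining edges E - S become edges between classes.\<close>
definition contr_class :: "'a set \<Rightarrow> 'a set set \<Rightarrow> 'a \<Rightarrow> 'a set" where
  "contr_class V S x = {y \<in> V. (x, y) \<in> {(a, b). {a, b} \<in> S}\<^sup>*}"

text \<open>Contracting S yields P4 iff there is
  a bijection f of the contracted vertex set onto {0..3} that induces a bijection of the
  remaining edges E - S onto the edges of P4 (this also excludes loops and multiple edges).\<close>
definition P4_edges :: "nat set set" where
  "P4_edges = {{0,1},{1,2},{2,3}}"

definition contracts_to_P4 :: "'a set \<Rightarrow> 'a set set \<Rightarrow> 'a set set \<Rightarrow> bool" where
  "contracts_to_P4 V E S \<longleftrightarrow> (\<exists>f. bij_betw f (contr_class V S ` V) {0..3::nat} \<and>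
      bij_betw (\<lambda>e. f ` (contr_class V S ` e)) (E - S) P4_edges)"

end

theory Submission
  imports Defs
begin

lemma path_edges_conv: "path_edges ps = (\<lambda>i. {ps ! i, ps ! Suc i}) ` {..<length ps - 1}"
  by (auto simp: path_edges_def)

lemma path_edges_Nil [simp]: "path_edges [] = {}"
  and path_edges_singleton [simp]: "path_edges [a] = {}"
  by (simp_all add: path_edges_def)

lemma path_edges_Cons_Cons [simp]: "path_edges (a # b # ps) = insert {a, b} (path_edges (b # ps))"
  unfolding path_edges_conv by (simp add: lessThan_Suc_eq_insert_0 image_image)

lemma path_edges_Cons: "ps \<noteq> [] \<Longrightarrow> path_edges (a # ps) = insert {a, hd ps} (path_edges ps)"
  by (cases ps) auto

lemma path_edges_Cons_subset: "path_edges ps \<subseteq> path_edges (a # ps)"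
  by (cases ps) auto

lemma finite_path_edges [simp]: "finite (path_edges ps)"
  by (simp add: path_edges_conv)

lemma path_edges_subset_set: "e \<in> path_edges ps \<Longrightarrow> e \<subseteq> set ps"
  by (auto simp: path_edges_def)

lemma path_edges_append: "path_edges (xs @ ys) = path_edges xs \<union> path_edges ys \<union>
   (if xs \<noteq> [] \<and> ys \<noteq> [] then {{last xs, hd ys}} else {})"
proof (induction xs)
  case (Cons a xs)
  then show ?case by (cases xs; cases ys) auto
qed simp

lemma path_edges_snoc: "ps \<noteq> [] \<Longrightarrow> path_edges (ps @ [a]) = insert {last ps, a} (path_edges ps)"
  by (simp add: path_edges_append)

lemma path_edges_rev [simp]: "path_edges (rev ps) = path_edges ps"
proof (induction ps)
  case (Cons a ps)
  then show ?case by (cases "ps = []") (auto simp: path_edges_snoc path_edges_Cons last_rev insert_commute)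
qed simp

lemma path_edges_take_subset: "path_edges (take n ps) \<subseteq> path_edges ps"
  using path_edges_append[of "take n ps" "drop n ps"] by auto

lemma path_edges_empty_iff: "path_edges ps = {} \<longleftrightarrow> length ps \<le> 1"
  by (cases ps rule: remdups_adj.cases) auto

lemma card_path_edges: "distinct ps \<Longrightarrow> card (path_edges ps) = length ps - 1"
proof (induction ps)
  case (Cons a ps)
  then have "{a, hd ps} \<notin> path_edges ps" using path_edges_subset_set by fastforce
  with Cons show ?case by (cases "ps = []") (simp_all add: path_edges_Cons)
qed simp

lemma distinct_hd_eq_last: "ps \<noteq> [] \<Longrightarrow> distinct ps \<Longrightarrow> hd ps = last ps \<Longrightarrow> ps = [hd ps]"
  by (cases ps rule: rev_cases) (auto split: if_splits simp: hd_append)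

lemma distinct_interior_vertex:
  assumes "distinct ps" "x \<in> set ps" "x \<noteq> hd ps" "x \<noteq> last ps"
  obtains a b where "a \<noteq> b" "{a, x} \<in> path_edges ps" "{x, b} \<in> path_edges ps"
proof -
  obtain xs ys where ps: "ps = xs @ x # ys" using assms(2) by (meson split_list)
  have "xs \<noteq> []" "ys \<noteq> []" using ps assms(3,4) by auto
  then have "{last xs, x} \<in> path_edges ps" "{x, hd ys} \<in> path_edges ps"
    using ps by (auto simp: path_edges_append path_edges_Cons)
  moreover have "last xs \<noteq> hd ys"
    using ps assms(1) \<open>xs \<noteq> []\<close> \<open>ys \<noteq> []\<close> by (auto dest: last_in_set hd_in_set)
  ultimately show ?thesis using that by blast
qed

lemma set_subset_Union_path_edges: "2 \<le> length ps \<Longrightarrow> set ps \<subseteq> \<Union> (path_edges ps)"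
proof (induction ps rule: induct_list012)
  case (3 x y zs)
  then show ?case by (cases zs) auto
qed simp_all

lemma is_walk_iff: "is_walk E ps \<longleftrightarrow> ps \<noteq> [] \<and> path_edges ps \<subseteq> E"
  by (auto simp: is_walk_def path_edges_def)

lemma simple_path_iff: "simple_path E ps \<longleftrightarrow> ps \<noteq> [] \<and> distinct ps \<and> path_edges ps \<subseteq> E"
  by (auto simp: simple_path_def is_walk_iff)

lemma simple_path_Cons_iff:
  "ps \<noteq> [] \<Longrightarrow> simple_path E (a # ps) \<longleftrightarrow> {a, hd ps} \<in> E \<and> a \<notin> set ps \<and> simple_path E ps"
  by (auto simp: simple_path_iff path_edges_Cons)

lemma simple_path_rev: "simple_path E ps \<Longrightarrow> simple_path E (rev ps)"
  by (simp add: simple_path_iff)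

lemma simple_path_take: "simple_path E ps \<Longrightarrow> 0 < n \<Longrightarrow> simple_path E (take n ps)"
  using path_edges_take_subset[of n ps] by (auto simp: simple_path_iff)

lemma distinct_subwalk:
  assumes "ps \<noteq> []"
  obtains qs where "qs \<noteq> []" "distinct qs" "hd qs = hd ps" "last qs = last ps"
    "path_edges qs \<subseteq> path_edges ps" "set qs \<subseteq> set ps"
  using assms
proof (induction ps arbitrary: thesis)
  case (Cons a ps)
  show ?case
  proof (cases "ps = []")
    case True
    then show ?thesis using Cons.prems(1)[of "[a]"] by simp
  next
    case False
    then obtain qs where qs: "qs \<noteq> []" "distinct qs" "hd qs = hd ps" "last qs = last ps"
      "path_edges qs \<subseteq> path_edges ps" "set qs \<subseteq> set ps" using Cons.IH by blast
    show ?thesis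
    proof (cases "a \<in> set qs")
      case True
      \<comment> \<open>shortcut the loop back to \<open>a\<close>\<close>
      then obtain xs ys where xy: "qs = xs @ a # ys" by (meson split_list)
      have "path_edges (a # ys) \<subseteq> path_edges qs" using xy by (auto simp: path_edges_append)
      then have "path_edges (a # ys) \<subseteq> path_edges (a # ps)"
        using qs(5) path_edges_Cons_subset[of ps a] by blast
      then show ?thesis using Cons.prems(1)[of "a # ys"] qs xy \<open>ps \<noteq> []\<close> by auto
    next
      case False
      then show ?thesis using Cons.prems(1)[of "a # qs"] qs \<open>ps \<noteq> []\<close> by (auto simp: path_edges_Cons)
    qed
  qed
qed simp

definition edge_rel :: "'a set set \<Rightarrow> ('a \<times> 'a) set" where
  "edge_rel S = {(a, b). {a, b} \<in> S}"

lemma sym_rtrancl_edge_rel: "sym ((edge_rel S)\<^sup>*)"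
  by (rule sym_rtrancl) (auto simp: edge_rel_def sym_def insert_commute)

lemma rtrancl_edge_rel_iff:
  "(x, y) \<in> (edge_rel S)\<^sup>* \<longleftrightarrow> (\<exists>ps. ps \<noteq> [] \<and> hd ps = x \<and> last ps = y \<and> path_edges ps \<subseteq> S)"
proof
  assume "(x, y) \<in> (edge_rel S)\<^sup>*"
  then show "\<exists>ps. ps \<noteq> [] \<and> hd ps = x \<and> last ps = y \<and> path_edges ps \<subseteq> S"
  proof (induction rule: rtrancl_induct)
    case base
    show ?case by (rule exI[of _ "[x]"]) simp
  next
    case (step y z)
    then obtain ps where "ps \<noteq> []" "hd ps = x" "last ps = y" "path_edges ps \<subseteq> S" by blast
    with step.hyps(2) show ?case
      by (intro exI[of _ "ps @ [z]"]) (auto simp: path_edges_snoc edge_rel_def)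
  qed
next
  assume "\<exists>ps. ps \<noteq> [] \<and> hd ps = x \<and> last ps = y \<and> path_edges ps \<subseteq> S"
  then obtain ps where "ps \<noteq> []" "hd ps = x" "last ps = y" "path_edges ps \<subseteq> S" by blast
  then show "(x, y) \<in> (edge_rel S)\<^sup>*"
  proof (induction ps arbitrary: x)
    case (Cons a ps)
    show ?case
    proof (cases "ps = []")
      case False
      then have "(a, hd ps) \<in> edge_rel S" "(hd ps, y) \<in> (edge_rel S)\<^sup>*"
        using Cons path_edges_Cons_subset[of ps a] by (auto simp: path_edges_Cons edge_rel_def)
      then show ?thesis using Cons.prems(2) by (simp add: converse_rtrancl_into_rtrancl)
    qed (use Cons in simp)
  qed simp
qed

lemma is_treeD:
  assumes "is_tree V E"
  shows "finite V" and "e \<in> E \<Longrightarrow> e \<subseteq> V" and "e \<in> E \<Longrightarrow> card e = 2" and "card E + 1 = card V"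
    and "p \<in> V \<Longrightarrow> q \<in> V \<Longrightarrow> \<exists>ps. is_walk E ps \<and> hd ps = p \<and> last ps = q"
  using assms unfolding is_tree_def by blast+

lemma is_tree_finite_edges: "is_tree V E \<Longrightarrow> finite E"
  by (meson Pow_iff finite_Pow_iff is_treeD(1,2) rev_finite_subset subsetI)

lemma is_tree_degree_sum:
  assumes T: "is_tree V E"
  shows "(\<Sum>v\<in>V. card {e\<in>E. v \<in> e}) = 2 * card E"
proof -
  have "(\<Sum>v\<in>V. card {e\<in>E. v \<in> e}) = (\<Sum>v\<in>V. \<Sum>e\<in>E. if v \<in> e then 1 else 0::nat)"
    using is_tree_finite_edges[OF T] by (simp add: sum.inter_filter[symmetric])
  also have "\<dots> = (\<Sum>e\<in>E. \<Sum>v\<in>V. if v \<in> e then 1 else 0)" by (rule sum.swap)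
  also have "\<dots> = (\<Sum>e\<in>E. 2)"
  proof (rule sum.cong)
    fix e assume e: "e \<in> E"
    then have "{v\<in>V. v \<in> e} = e" using is_treeD(2)[OF T] by auto
    then show "(\<Sum>v\<in>V. if v \<in> e then 1 else 0::nat) = 2"
      using is_treeD(1,3)[OF T] e by (simp add: sum.inter_filter[symmetric])
  qed simp
  finally show ?thesis by simp
qed

lemma is_tree_leaf:
  assumes T: "is_tree V E" and V2: "2 \<le> card V"
  obtains l u where "l \<in> V" "l \<noteq> u" "{e\<in>E. l \<in> e} = {{l, u}}"
proof -
  have "\<exists>l\<in>V. card {e\<in>E. l \<in> e} < 2"
  proof (rule ccontr)
    assume "\<not> ?thesis"
    then have "(\<Sum>v\<in>V. 2) \<le> (\<Sum>v\<in>V. card {e\<in>E. v \<in> e})" by (intro sum_mono) auto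
    then show False using is_tree_degree_sum[OF T] is_treeD(4)[OF T] by simp
  qed
  then obtain l where l: "l \<in> V" "card {e\<in>E. l \<in> e} < 2" by blast
  have "card (V - {l}) \<noteq> 0" using V2 l(1) by (simp add: card_Diff_singleton)
  then have "V - {l} \<noteq> {}" by (metis card.empty)
  then obtain q where q: "q \<in> V" "q \<noteq> l" by blast
  obtain ps where ps: "is_walk E ps" "hd ps = l" "last ps = q" using is_treeD(5)[OF T l(1) q(1)] by blast
  then obtain b rest where "ps = l # b # rest"
    using q(2) by (cases ps rule: remdups_adj.cases) (auto simp: is_walk_iff)
  then have "{l, b} \<in> {e\<in>E. l \<in> e}" using ps(1) by (simp add: is_walk_iff)
  then have "card {e\<in>E. l \<in> e} \<noteq> 0" using is_tree_finite_edges[OF T] by auto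
  then have "card {e\<in>E. l \<in> e} = 1" using l(2) by linarith
  then obtain e where e: "{e\<in>E. l \<in> e} = {e}" by (meson card_1_singletonE)
  then have "card e = 2" "l \<in> e" using is_treeD(3)[OF T] by auto
  then obtain x y where xy: "e = {x, y}" "x \<noteq> y" "l \<in> {x, y}" by (auto simp: card_2_iff)
  show ?thesis
  proof (cases "x = l")
    case True
    then show ?thesis using that[of l y] l(1) e xy by simp
  next
    case False
    then show ?thesis using that[of l x] l(1) e xy by (simp add: insert_commute)
  qed
qed

lemma leaf_neighbour:
  assumes "{e\<in>E. l \<in> e} = {{l, u}}" and "{a, l} \<in> E"
  shows "a = u"
proof -
  have "{a, l} \<in> {e\<in>E. l \<in> e}" using assms(2) by simp
  then have "{a, l} = {l, u}" using assms(1) by simp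
  then show ?thesis by (auto simp: doubleton_eq_iff)
qed

lemma leaf_on_path_endpoint:
  assumes leaf: "{e\<in>E. l \<in> e} = {{l, u}}" and ps: "distinct ps" "path_edges ps \<subseteq> E" "l \<in> set ps"
  shows "l = hd ps \<or> l = last ps"
proof (rule ccontr)
  assume "\<not> ?thesis"
  then obtain a b where ab: "a \<noteq> b" "{a, l} \<in> path_edges ps" "{l, b} \<in> path_edges ps"
    using distinct_interior_vertex[OF ps(1,3)] by blast
  then have "{a, l} \<in> E" "{b, l} \<in> E" using ps(2) by (auto simp: insert_commute)
  then show False using leaf_neighbour[OF leaf, of a] leaf_neighbour[OF leaf, of b] ab(1) by blast
qed

lemma is_tree_remove_leaf:
  assumes T: "is_tree V E" and l: "l \<in> V" and leaf: "{e\<in>E. l \<in> e} = {{l, u}}"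
  shows "is_tree (V - {l}) {e\<in>E. l \<notin> e}"
  unfolding is_tree_def
proof (intro conjI ballI)
  show "finite (V - {l})" using is_treeD(1)[OF T] by simp
next
  fix e assume "e \<in> {e\<in>E. l \<notin> e}"
  then show "e \<subseteq> V - {l}" "card e = 2" using is_treeD(2,3)[OF T] by auto
next
  have "E = insert {l, u} {e\<in>E. l \<notin> e}" "{l, u} \<notin> {e\<in>E. l \<notin> e}" using leaf by auto
  then have "card E = Suc (card {e\<in>E. l \<notin> e})"
    using is_tree_finite_edges[OF T] by (metis card_insert_disjoint finite_insert)
  then show "card {e\<in>E. l \<notin> e} + 1 = card (V - {l})"
    using is_treeD(4)[OF T] l by (simp add: card_Diff_singleton)
next
  fix p q assume p: "p \<in> V - {l}" and q: "q \<in> V - {l}"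
  obtain ps where ps: "is_walk E ps" "hd ps = p" "last ps = q" using is_treeD(5)[OF T] p q by blast
  then have "ps \<noteq> []" "path_edges ps \<subseteq> E" by (simp_all add: is_walk_iff)
  then obtain qs where qs: "qs \<noteq> []" "distinct qs" "hd qs = p" "last qs = q" "path_edges qs \<subseteq> E"
    using distinct_subwalk[of ps] ps(2,3) by (metis subset_trans)
  have "l \<notin> set qs" using leaf_on_path_endpoint[OF leaf qs(2,5)] qs(3,4) p q by auto
  then have "path_edges qs \<subseteq> {e\<in>E. l \<notin> e}" using qs(5) path_edges_subset_set by fastforce
  then show "\<exists>ps. is_walk {e\<in>E. l \<notin> e} ps \<and> hd ps = p \<and> last ps = q"
    using qs(1,3,4) by (auto simp: is_walk_iff)
qed

lemma tree_simple_path_unique: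
  assumes "is_tree V E" "simple_path E ps" "simple_path E qs" "hd ps = hd qs" "last ps = last qs"
  shows "ps = qs"
  using assms
proof (induction "card V" arbitrary: V E ps qs rule: less_induct)
  case less
  have fE: "finite E" and cE: "card E + 1 = card V"
    using is_tree_finite_edges[OF less.prems(1)] is_treeD(4)[OF less.prems(1)] .
  show ?case
  proof (cases "2 \<le> card V")
    case False
    then have "card E = 0" using cE by simp
    then have "E = {}" using fE by simp
    have single: "ps' = [hd ps']" if "simple_path E ps'" for ps'
    proof -
      have "ps' \<noteq> []" "path_edges ps' = {}" using that \<open>E = {}\<close> by (auto simp: simple_path_iff)
      then show ?thesis by (cases ps') (auto simp: path_edges_empty_iff)
    qed
    show ?thesis using single[OF less.prems(2)] single[OF less.prems(3)] less.prems(4) by metis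
  next
    case True
    \<comment> \<open>remove a leaf \<open>l\<close>; simple paths through \<open>l\<close> start or end there\<close>
    obtain l u where l: "l \<in> V" "l \<noteq> u" and leaf: "{e\<in>E. l \<in> e} = {{l, u}}"
      using is_tree_leaf[OF less.prems(1) True] by blast
    define E' where "E' = {e\<in>E. l \<notin> e}"
    have lt: "card (V - {l}) < card V" using l(1) True by (simp add: card_Diff_singleton)
    have IH: "ps' = qs'" if "simple_path E' ps'" "simple_path E' qs'" "hd ps' = hd qs'" "last ps' = last qs'"
      for ps' qs'
      by (rule less.hyps[OF lt is_tree_remove_leaf[OF less.prems(1) l(1) leaf, folded E'_def] that])
    have avoid: "simple_path E' ps'" if "simple_path E ps'" "l \<notin> set ps'" for ps'
      using that by (auto simp: simple_path_iff E'_def dest: path_edges_subset_set)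
    have tail: "simple_path E' xs \<and> hd xs = u" if "simple_path E (l # xs)" "xs \<noteq> []" for xs
    proof -
      have "{l, hd xs} \<in> E" "l \<notin> set xs" "simple_path E xs"
        using that simple_path_Cons_iff[of xs E l] by simp_all
      then show ?thesis using avoid leaf_neighbour[OF leaf, of "hd xs"] by (simp add: insert_commute)
    qed
    have from_leaf: "ps' = qs'"
      if ps': "simple_path E ps'" "hd ps' = l" and qs': "simple_path E qs'" "hd qs' = l"
        and last: "last ps' = last qs'" for ps' qs'
    proof (cases "last ps' = l")
      case True
      have "ps' \<noteq> []" "distinct ps'" "qs' \<noteq> []" "distinct qs'"
        using ps'(1) qs'(1) by (simp_all add: simple_path_iff)
      moreover have "hd ps' = last ps'" "hd qs' = last qs'" using ps'(2) qs'(2) last True by simp_all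
      ultimately have "ps' = [hd ps']" "qs' = [hd qs']" using distinct_hd_eq_last by blast+
      then show ?thesis using ps'(2) qs'(2) by metis
    next
      case False
      obtain xs ys where "ps' = l # xs" "qs' = l # ys"
        using ps' qs' by (cases ps'; cases qs') (auto simp: simple_path_iff)
      then have xs: "ps' = l # xs" "xs \<noteq> []" and ys: "qs' = l # ys" "ys \<noteq> []"
        using False last by auto
      have "simple_path E' xs" "hd xs = u" using tail ps'(1) xs by simp_all
      moreover have "simple_path E' ys" "hd ys = u" using tail qs'(1) ys by simp_all
      ultimately show ?thesis using IH[of xs ys] last xs ys by simp
    qed
    have "l \<in> set ps \<Longrightarrow> l = hd ps \<or> l = last ps" "l \<in> set qs \<Longrightarrow> l = hd qs \<or> l = last qs"
      using leaf_on_path_endpoint[OF leaf] less.prems(2,3) by (simp_all add: simple_path_iff)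
    then have ends: "l \<notin> set ps \<and> l \<notin> set qs \<or> hd ps = l \<or> last ps = l"
      using less.prems(4,5) by auto
    then show ?thesis
    proof (elim disjE)
      assume "l \<notin> set ps \<and> l \<notin> set qs"
      then show ?thesis using IH avoid less.prems(2-5) by blast
    next
      assume "hd ps = l"
      then show ?thesis using less.prems(2-5) by (intro from_leaf) simp_all
    next
      assume "last ps = l"
      moreover have "ps \<noteq> []" "qs \<noteq> []" using less.prems(2,3) by (simp_all add: simple_path_iff)
      ultimately have "rev ps = rev qs" using less.prems(2-5)
        by (intro from_leaf) (simp_all add: simple_path_rev hd_rev last_rev)
      then show ?thesis by simp
    qed
  qed
qed

lemma card_3_eq:
  assumes "card T = 3" "a \<in> T" "b \<in> T" "c \<in> T" "a \<noteq> b" "a \<noteq> c" "b \<noteq> c"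
  shows "T = {a, b, c}"
proof -
  have "finite T" using assms(1) by (metis card.infinite zero_neq_numeral)
  moreover have "{a, b, c} \<subseteq> T" "card {a, b, c} = card T" using assms by auto
  ultimately show ?thesis by (metis card_subset_eq)
qed

lemma card_3_sorted:
  fixes N :: "'a::linorder set"
  assumes "card N = 3"
  obtains i j k where "i < j" "j < k" "N = {i, j, k}"
proof -
  have fin: "finite N" using assms by (metis card.infinite zero_neq_numeral)
  have "length (sorted_list_of_set N) = Suc (Suc (Suc 0))" using assms by simp
  then obtain i j k where l: "sorted_list_of_set N = [i, j, k]"
    unfolding length_Suc_conv length_0_conv by blast
  have "sorted_wrt (<) (sorted_list_of_set N)" by simp
  moreover have "set (sorted_list_of_set N) = N" using fin by simp
  ultimately show ?thesis using that[of i j k] l by simp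
qed
lemma card_eq_in_chain:
  assumes "A \<in> {{}, {a}, {a, b}, {a, b, c}}" "B \<in> {{}, {a}, {a, b}, {a, b, c}}"
    and "a \<noteq> b" "a \<noteq> c" "b \<noteq> c" and "card A = card B"
  shows "A = B"
  using assms by (elim insertE emptyE) simp_all

lemma double_sum_indicator_eq_card:
  assumes "finite A"
  shows "(\<Sum>x\<in>A. \<Sum>y\<in>A. if P x y then 1 else 0::nat) = card {(x, y). x \<in> A \<and> y \<in> A \<and> P x y}"
proof -
  have "(\<Sum>x\<in>A. \<Sum>y\<in>A. if P x y then 1 else 0::nat) = (\<Sum>xy\<in>A \<times> A. if P (fst xy) (snd xy) then 1 else 0)"
    by (simp add: sum.cartesian_product split_def)
  also have "\<dots> = card {xy \<in> A \<times> A. P (fst xy) (snd xy)}"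
    using assms by (simp add: sum.inter_filter[symmetric])
  also have "{xy \<in> A \<times> A. P (fst xy) (snd xy)} = {(x, y). x \<in> A \<and> y \<in> A \<and> P x y}" by auto
  finally show ?thesis .
qed

definition path_edge :: "'a list \<Rightarrow> nat \<Rightarrow> 'a set" where
  "path_edge ps n = {ps ! n, ps ! Suc n}"

lemma path_edges_eq_image: "path_edges ps = path_edge ps ` {n. Suc n < length ps}"
  by (auto simp: path_edges_def path_edge_def)

lemma path_edge_inj:
  assumes "distinct ps" "Suc n < length ps" "Suc m < length ps"
  shows "path_edge ps n = path_edge ps m \<longleftrightarrow> n = m"
proof
  assume "path_edge ps n = path_edge ps m"
  then have "ps ! n = ps ! m \<and> ps ! Suc n = ps ! Suc m \<or> ps ! n = ps ! Suc m \<and> ps ! Suc n = ps ! m"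
    by (auto simp: path_edge_def doubleton_eq_iff)
  then show "n = m" using assms by (auto simp: nth_eq_iff_index_eq)
qed simp

lemma path_edge_in_take_iff:
  assumes "distinct ps" "Suc i < length ps" "j < length ps"
  shows "path_edge ps i \<in> path_edges (take (Suc j) ps) \<longleftrightarrow> i < j"
proof -
  have "path_edges (take (Suc j) ps) = path_edge ps ` {n. Suc n < Suc j}"
    using assms(3) by (auto simp: path_edges_eq_image path_edge_def min_def)
  moreover have "path_edge ps i \<in> path_edge ps ` {n. n < j} \<longleftrightarrow> i < j"
  proof
    assume "path_edge ps i \<in> path_edge ps ` {n. n < j}"
    then obtain n where "n < j" "path_edge ps i = path_edge ps n" by auto
    moreover have "Suc n < length ps" using \<open>n < j\<close> assms(3) by simp
    ultimately show "i < j" using path_edge_inj[OF assms(1,2)] by auto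
  qed auto
  ultimately show ?thesis by simp
qed

definition tree_path :: "'a set set \<Rightarrow> 'a \<Rightarrow> 'a \<Rightarrow> 'a list" where
  "tree_path E p q = (THE ps. simple_path E ps \<and> hd ps = p \<and> last ps = q)"

text \<open>In a tree, the edge \<open>e\<close> lies on the path from \<open>x\<close> to \<open>y\<close> exactly when deleting it
  disconnects \<open>x\<close> from \<open>y\<close> (lemma \<open>joined_iff_not_separates\<close>).\<close>
definition separates :: "'a set set \<Rightarrow> 'a set \<Rightarrow> 'a \<Rightarrow> 'a \<Rightarrow> bool" where
  "separates E e x y \<longleftrightarrow> e \<in> path_edges (tree_path E x y)"

definition class_label :: "'a set set \<Rightarrow> 'a \<Rightarrow> 'a set set \<Rightarrow> 'a set \<Rightarrow> nat" where
  "class_label E x T C = card {e\<in>T. \<exists>w\<in>C. separates E e x w}"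

locale tree =
  fixes V :: "'a set" and E :: "'a set set"
  assumes is_tree: "is_tree V E"
begin

lemma finite_V: "finite V"
  and finite_E: "finite E"
  and edge_subset: "e \<in> E \<Longrightarrow> e \<subseteq> V"
  and card_edge: "e \<in> E \<Longrightarrow> card e = 2"
  and card_E: "card E + 1 = card V"
  using is_treeD[OF is_tree] is_tree_finite_edges[OF is_tree] by blast+

lemma edgeE:
  assumes "e \<in> E"
  obtains a b where "e = {a, b}" "a \<noteq> b"
  using card_edge[OF assms] by (meson card_2_iff)

lemma edge_neq: "{p, q} \<in> E \<Longrightarrow> p \<noteq> q"
  using card_edge by fastforce

lemma edge_nonempty: "e \<in> E \<Longrightarrow> e \<noteq> {}"
  using card_edge by fastforce

lemma simple_path_exists:
  assumes "p \<in> V" "q \<in> V"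
  obtains ps where "simple_path E ps" "hd ps = p" "last ps = q"
proof -
  obtain ps where ps: "is_walk E ps" "hd ps = p" "last ps = q" using is_treeD(5)[OF is_tree assms] by blast
  then have "ps \<noteq> []" "path_edges ps \<subseteq> E" by (simp_all add: is_walk_iff)
  then obtain qs where "qs \<noteq> []" "distinct qs" "hd qs = p" "last qs = q" "path_edges qs \<subseteq> E"
    using distinct_subwalk[of ps] ps(2,3) by (metis subset_trans)
  then show ?thesis using that by (simp add: simple_path_iff)
qed

lemma tree_path_eq:
  assumes "simple_path E ps" "hd ps = p" "last ps = q"
  shows "tree_path E p q = ps"
  unfolding tree_path_def
proof (rule the_equality)
  show "simple_path E ps \<and> hd ps = p \<and> last ps = q" using assms by simp
  show "qs = ps" if "simple_path E qs \<and> hd qs = p \<and> last qs = q" for qs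
    by (rule tree_simple_path_unique[OF is_tree]) (use that assms in simp_all)
qed

lemma tree_path:
  assumes "p \<in> V" "q \<in> V"
  shows "simple_path E (tree_path E p q)" "hd (tree_path E p q) = p" "last (tree_path E p q) = q"
proof -
  obtain ps where ps: "simple_path E ps" "hd ps = p" "last ps = q" using simple_path_exists[OF assms] .
  then have "tree_path E p q = ps" by (rule tree_path_eq)
  then show "simple_path E (tree_path E p q)" "hd (tree_path E p q) = p" "last (tree_path E p q) = q"
    using ps by simp_all
qed

lemma tree_path_refl: "tree_path E p p = [p]"
  by (rule tree_path_eq) (simp_all add: simple_path_iff)

lemma tree_path_rev: "p \<in> V \<Longrightarrow> q \<in> V \<Longrightarrow> tree_path E q p = rev (tree_path E p q)"
  by (rule tree_path_eq) (simp_all add: simple_path_rev tree_path hd_rev last_rev)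

lemma tree_path_edge: "{p, q} \<in> E \<Longrightarrow> tree_path E p q = [p, q]"
  by (rule tree_path_eq) (simp_all add: simple_path_iff edge_neq)

lemma set_simple_path:
  assumes "simple_path E ps" "hd ps \<in> V"
  shows "set ps \<subseteq> V"
proof (cases "2 \<le> length ps")
  case True
  then show ?thesis
    using set_subset_Union_path_edges[OF True] assms(1) edge_subset by (fastforce simp: simple_path_iff)
next
  case False
  then have "set ps = {hd ps}" using assms(1) by (cases ps) (auto simp: simple_path_iff Suc_le_eq)
  then show ?thesis using assms(2) by simp
qed

lemma set_tree_path: "p \<in> V \<Longrightarrow> q \<in> V \<Longrightarrow> set (tree_path E p q) \<subseteq> V"
  by (rule set_simple_path) (simp_all add: tree_path)

lemma tdist_eq_card_tree_path:
  assumes "p \<in> V" "q \<in> V"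
  shows "tdist E p q = card (path_edges (tree_path E p q))"
proof -
  let ?s = "tree_path E p q"
  have s: "?s \<noteq> []" "distinct ?s" "is_walk E ?s"
    using tree_path(1)[OF assms] by (simp_all add: simple_path_iff is_walk_iff)
  have "(LEAST n. \<exists>ps. is_walk E ps \<and> hd ps = p \<and> last ps = q \<and> length ps = Suc n) = length ?s - 1"
  proof (rule Least_equality)
    show "\<exists>ps. is_walk E ps \<and> hd ps = p \<and> last ps = q \<and> length ps = Suc (length ?s - 1)"
      using s tree_path[OF assms] by (intro exI[of _ ?s]) simp
  next
    fix n assume "\<exists>ps. is_walk E ps \<and> hd ps = p \<and> last ps = q \<and> length ps = Suc n"
    then obtain ps where ps: "is_walk E ps" "hd ps = p" "last ps = q" "length ps = Suc n" by blast
    then have "ps \<noteq> []" "path_edges ps \<subseteq> E" by (simp_all add: is_walk_iff)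
    then obtain qs where qs: "qs \<noteq> []" "distinct qs" "hd qs = p" "last qs = q"
      "path_edges qs \<subseteq> E" "set qs \<subseteq> set ps"
      using distinct_subwalk[of ps] ps(2,3) by (metis subset_trans)
    \<comment> \<open>the tree path is the shortest walk since every walk contains a simple one\<close>
    have "?s = qs" using qs by (intro tree_path_eq) (simp_all add: simple_path_iff)
    have "length qs = card (set qs)" using qs(2) by (simp add: distinct_card)
    also have "\<dots> \<le> card (set ps)" by (rule card_mono) (simp_all add: qs(6))
    also have "\<dots> \<le> length ps" by (rule card_length)
    finally show "length ?s - 1 \<le> n" using \<open>?s = qs\<close> ps(4) by simp
  qed
  then show ?thesis using card_path_edges[OF s(2)] by (simp add: tdist_def)
qed

lemma joined_iff_not_separates:
  assumes "x \<in> V" "y \<in> V"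
  shows "(x, y) \<in> (edge_rel (E - S))\<^sup>* \<longleftrightarrow> (\<forall>e\<in>S. \<not> separates E e x y)"
proof
  assume "(x, y) \<in> (edge_rel (E - S))\<^sup>*"
  then obtain ps where ps: "ps \<noteq> []" "hd ps = x" "last ps = y" "path_edges ps \<subseteq> E - S"
    unfolding rtrancl_edge_rel_iff by blast
  then obtain qs where qs: "qs \<noteq> []" "distinct qs" "hd qs = x" "last qs = y" "path_edges qs \<subseteq> E - S"
    using distinct_subwalk[of ps] by (metis subset_trans)
  then have "tree_path E x y = qs" by (intro tree_path_eq) (auto simp: simple_path_iff)
  then show "\<forall>e\<in>S. \<not> separates E e x y" using qs(5) by (auto simp: separates_def)
next
  assume "\<forall>e\<in>S. \<not> separates E e x y"
  then have "path_edges (tree_path E x y) \<subseteq> E - S"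
    using tree_path(1)[OF assms] by (auto simp: separates_def simple_path_iff)
  then show "(x, y) \<in> (edge_rel (E - S))\<^sup>*"
    unfolding rtrancl_edge_rel_iff using tree_path[OF assms] by (auto simp: simple_path_iff)
qed

lemma not_separates_refl [simp]: "\<not> separates E e x x"
  by (simp add: separates_def tree_path_refl)

lemma separates_sym: "x \<in> V \<Longrightarrow> y \<in> V \<Longrightarrow> separates E e x y = separates E e y x"
  by (simp add: separates_def tree_path_rev[of x y])

lemma separates_edge_iff: "{p, q} \<in> E \<Longrightarrow> separates E e p q \<longleftrightarrow> e = {p, q}"
  by (simp add: separates_def tree_path_edge)

lemma not_separates_other_edge:
  assumes "e \<in> E" "f \<in> E" "f \<noteq> e" "p \<in> f" "q \<in> f"
  shows "\<not> separates E e p q"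
proof (cases "p = q")
  case False
  then have "f = {p, q}" using assms(2,4,5) by (elim edgeE) auto
  then show ?thesis using separates_edge_iff assms by auto
qed simp

lemma joined_to_an_end:
  assumes e: "{a, b} \<in> E" and x: "x \<in> V"
  shows "(a, x) \<in> (edge_rel (E - {{a, b}}))\<^sup>* \<or> (b, x) \<in> (edge_rel (E - {{a, b}}))\<^sup>*"
proof (cases "separates E {a, b} a x")
  case False
  then show ?thesis using joined_iff_not_separates[OF _ x, of a "{{a, b}}"] edge_subset[OF e] by simp
next
  case True
  \<comment> \<open>the path from \<open>a\<close> to \<open>x\<close> starts with the edge \<open>{a, b}\<close> and then avoids it\<close>
  have aV: "a \<in> V" using edge_subset[OF e] by blast
  let ?s = "tree_path E a x"
  obtain rest where r: "?s = a # rest" using tree_path[OF aV x] by (cases ?s) (auto simp: simple_path_iff)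
  then have rest: "rest \<noteq> []" "a \<notin> set rest" "path_edges ?s \<subseteq> E"
    using True tree_path(1)[OF aV x] by (auto simp: separates_def simple_path_iff)
  then have pe: "path_edges ?s = insert {a, hd rest} (path_edges rest)" using r by (simp add: path_edges_Cons)
  have "{a, b} \<notin> path_edges rest" using rest(2) path_edges_subset_set[of "{a, b}" rest] by blast
  then have "{a, b} = {a, hd rest}" using True pe by (auto simp: separates_def)
  then have "hd rest = b" using edge_neq[OF e] by (auto simp: doubleton_eq_iff)
  moreover have "last rest = x" using tree_path(3)[OF aV x] r rest(1) by simp
  moreover have "path_edges rest \<subseteq> E - {{a, b}}" using rest(3) pe \<open>{a, b} \<notin> path_edges rest\<close> by auto
  ultimately show ?thesis unfolding rtrancl_edge_rel_iff using rest(1) by blast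
qed

lemma separates_iff_xor:
  assumes e: "e \<in> E" and V: "x \<in> V" "y \<in> V" "z \<in> V"
  shows "separates E e x y \<longleftrightarrow> (separates E e z x \<noteq> separates E e z y)"
proof -
  obtain a b where ab: "e = {a, b}" "a \<noteq> b" using e by (rule edgeE)
  have abV: "a \<in> V" "b \<in> V" using edge_subset[OF e] ab by auto
  let ?R = "(edge_rel (E - {e}))\<^sup>*"
  have sep: "separates E e w w' \<longleftrightarrow> (w, w') \<notin> ?R" if "w \<in> V" "w' \<in> V" for w w'
    using joined_iff_not_separates[OF that, of "{e}"] by simp
  have ab_apart: "(a, b) \<notin> ?R" using sep[OF abV] separates_edge_iff[of a b e] e ab by simp
  have ends: "(a, w) \<in> ?R \<or> (b, w) \<in> ?R" if "w \<in> V" for w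
    using joined_to_an_end[of a b w] e ab that by simp
  have sym: "(u, v) \<in> ?R \<Longrightarrow> (v, u) \<in> ?R" for u v using symD[OF sym_rtrancl_edge_rel] .
  \<comment> \<open>deleting \<open>e\<close> leaves exactly two components, those of \<open>a\<close> and of \<open>b\<close>\<close>
  have comp: "(w, w') \<in> ?R \<longleftrightarrow> ((a, w) \<in> ?R \<longleftrightarrow> (a, w') \<in> ?R)" if w: "w \<in> V" "w' \<in> V" for w w'
  proof (cases "(a, w) \<in> ?R")
    case True
    then show ?thesis using rtrancl_trans[OF True] rtrancl_trans[OF sym[OF True]] by blast
  next
    case False
    then have bw: "(w, b) \<in> ?R" using ends[OF w(1)] sym by blast
    have "(a, w') \<notin> ?R" if "(w, w') \<in> ?R"
      using False rtrancl_trans[OF _ sym[OF that]] by blast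
    moreover have "(w, w') \<in> ?R" if "(a, w') \<notin> ?R"
      using that ends[OF w(2)] rtrancl_trans[OF bw] by blast
    ultimately show ?thesis using False by blast
  qed
  show ?thesis
    unfolding sep[OF V(1,2)] sep[OF V(3,1)] sep[OF V(3,2)] comp[OF V(1,2)] comp[OF V(3,1)] comp[OF V(3,2)]
    by blast
qed

lemma tree_path_snoc:
  assumes a: "a \<in> V" and z: "z \<in> V" and az: "z \<noteq> a"
  obtains ys where "ys \<noteq> []" "tree_path E a z = ys @ [z]" "tree_path E a (last ys) = ys" "last ys \<in> V"
proof -
  let ?s = "tree_path E a z"
  have s: "simple_path E ?s" "?s \<noteq> []" "hd ?s = a" "last ?s = z"
    using tree_path[OF a z] by (simp_all add: simple_path_iff)
  obtain ys where e: "?s = ys @ [z]" using s(2,4) by (metis append_butlast_last_id)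
  have ne: "ys \<noteq> []" using e s(3) az by (cases ys) auto
  have "simple_path E ys" using simple_path_take[OF s(1), of "length ys"] e ne by simp
  moreover have "hd ys = a" using ne e s(3) by simp
  ultimately have "tree_path E a (last ys) = ys" by (intro tree_path_eq) simp_all
  moreover have "last ys \<in> V" using set_tree_path[OF a z] ne e by auto
  ultimately show ?thesis using that ne e by blast
qed

text \<open>Each vertex \<open>z \<noteq> r\<close> on \<open>r\<close>'s side of \<open>g\<close> is the far end of the last edge of the path from
  \<open>r\<close> to \<open>z\<close>; this injection shows that the side spans at least \<open>card side - 1\<close> edges.\<close>
lemma card_side_le:
  assumes g: "g \<in> E" and r: "r \<in> g"
  shows "card {z\<in>V. \<not> separates E g r z} \<le> card {f\<in>E - {g}. f \<subseteq> {z\<in>V. \<not> separates E g r z}} + 1"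
proof -
  let ?R = "{z\<in>V. \<not> separates E g r z}"
  let ?last_edge = "\<lambda>z. {last (butlast (tree_path E r z)), z}"
  have rV: "r \<in> V" using edge_subset[OF g] r by blast
  have last_edge: "?last_edge z = {last ys, z}" if "tree_path E r z = ys @ [z]" for z ys
    using that by simp
  have "inj_on ?last_edge (V - {r})"
  proof (rule inj_onI)
    fix z z' assume z: "z \<in> V - {r}" and z': "z' \<in> V - {r}" and eq: "?last_edge z = ?last_edge z'"
    obtain ys where ys: "ys \<noteq> []" "tree_path E r z = ys @ [z]" "tree_path E r (last ys) = ys"
      using z by (elim DiffE) (rule tree_path_snoc[OF rV], simp_all)
    obtain ys' where ys': "ys' \<noteq> []" "tree_path E r z' = ys' @ [z']" "tree_path E r (last ys') = ys'"
      using z' by (elim DiffE) (rule tree_path_snoc[OF rV], simp_all)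
    show "z = z'"
    proof (rule ccontr)
      assume ne: "z \<noteq> z'"
      then have "last ys = z'" "last ys' = z"
        using eq last_edge[OF ys(2)] last_edge[OF ys'(2)] by (auto simp: doubleton_eq_iff)
      then have "tree_path E r z = ys' @ [z', z]" using ys(2,3) ys'(2) by simp
      moreover have "z \<in> set ys'" using \<open>last ys' = z\<close> ys'(1) by auto
      ultimately show False using tree_path(1)[of r z] rV z by (simp add: simple_path_iff)
    qed
  qed
  then have inj: "inj_on ?last_edge (?R - {r})" by (rule inj_on_subset) auto
  have "?last_edge ` (?R - {r}) \<subseteq> {f\<in>E - {g}. f \<subseteq> ?R}"
  proof
    fix f assume "f \<in> ?last_edge ` (?R - {r})"
    then obtain z where z: "z \<in> V" "\<not> separates E g r z" "z \<noteq> r" "f = ?last_edge z" by blast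
    obtain ys where ys: "ys \<noteq> []" "tree_path E r z = ys @ [z]" "tree_path E r (last ys) = ys" "last ys \<in> V"
      by (rule tree_path_snoc[OF rV z(1,3)])
    have f: "f = {last ys, z}" using z(4) last_edge[OF ys(2)] by simp
    have pe: "path_edges (tree_path E r z) = insert f (path_edges ys)"
      using ys(1,2) f by (simp add: path_edges_snoc)
    have "path_edges (tree_path E r z) \<subseteq> E" using tree_path(1)[OF rV z(1)] by (simp add: simple_path_iff)
    then have fE: "f \<in> E" using pe by blast
    have g_off: "g \<notin> insert f (path_edges ys)" using z(2) pe by (simp add: separates_def)
    then have "\<not> separates E g r (last ys)" using ys(3) by (simp add: separates_def)
    then show "f \<in> {f\<in>E - {g}. f \<subseteq> ?R}" using fE g_off z(1,2) ys(4) f by blast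
  qed
  then have "card (?R - {r}) \<le> card {f\<in>E - {g}. f \<subseteq> ?R}"
    using inj finite_E by (intro card_inj_on_le) auto
  moreover have "r \<in> ?R" using rV by simp
  ultimately show ?thesis using finite_V by (simp add: card_Diff_singleton)
qed

lemma edge_within_side:
  assumes g: "g \<in> E" and sepA: "\<And>x y. x \<in> V \<Longrightarrow> y \<in> V \<Longrightarrow> separates E g x y \<longleftrightarrow> (x \<in> A \<longleftrightarrow> y \<notin> A)"
    and f: "f \<in> E - {g}"
  shows "f \<subseteq> A \<or> f \<subseteq> V - A"
proof -
  have "\<forall>p\<in>f. \<forall>q\<in>f. (p \<in> A \<longleftrightarrow> q \<in> A)"
    using not_separates_other_edge[OF g] sepA edge_subset f by blast
  then show ?thesis using f edge_subset by blast
qed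

lemma edge_cut:
  assumes g: "g \<in> E"
  obtains A where "A \<subseteq> V" "\<And>x y. x \<in> V \<Longrightarrow> y \<in> V \<Longrightarrow> separates E g x y \<longleftrightarrow> (x \<in> A \<longleftrightarrow> y \<notin> A)"
    "card {f\<in>E - {g}. f \<subseteq> A} + 1 = card A" "card {f\<in>E - {g}. f \<subseteq> V - A} + 1 = card (V - A)"
proof -
  obtain a b where ab: "g = {a, b}" "a \<noteq> b" using g by (rule edgeE)
  have abV: "a \<in> V" "b \<in> V" using edge_subset[OF g] ab by auto
  define A where "A = {z\<in>V. \<not> separates E g a z}"
  have sab: "separates E g a b" using separates_edge_iff[of a b g] g ab by simp
  have AV: "A \<subseteq> V" by (auto simp: A_def)
  have sepA: "separates E g x y \<longleftrightarrow> (x \<in> A \<longleftrightarrow> y \<notin> A)" if "x \<in> V" "y \<in> V" for x y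
    using separates_iff_xor[OF g that abV(1)] that by (auto simp: A_def)
  have B: "{z\<in>V. \<not> separates E g b z} = V - A"
    using separates_iff_xor[OF g abV(2) _ abV(1)] sab by (auto simp: A_def)
  let ?EA = "{f\<in>E - {g}. f \<subseteq> A}" and ?EB = "{f\<in>E - {g}. f \<subseteq> V - A}"
  \<comment> \<open>every other edge lies on one side, so the two sides together span \<open>card V - 2\<close> edges\<close>
  have "?EA \<union> ?EB = E - {g}" using edge_within_side[OF g sepA] by blast
  moreover have "?EA \<inter> ?EB = {}" using edge_nonempty by blast
  ultimately have "card ?EA + card ?EB = card (E - {g})"
    using finite_E by (metis (no_types, lifting) card_Un_disjoint finite_Diff finite_Un)
  also have "\<dots> + 2 = card V"
  proof -
    have "card E \<noteq> 0" using g finite_E by auto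
    then show ?thesis using g card_E by (simp add: card_Diff_singleton)
  qed
  finally have sum: "card ?EA + card ?EB + 2 = card V" .
  have "card A \<le> card ?EA + 1" using card_side_le[OF g, of a] ab by (simp add: A_def)
  moreover have "card (V - A) \<le> card ?EB + 1" using card_side_le[OF g, of b] ab B by simp
  moreover have "card A + card (V - A) = card V"
    using AV finite_V by (metis card_Diff_subset card_mono le_add_diff_inverse rev_finite_subset)
  ultimately have "card ?EA + 1 = card A" "card ?EB + 1 = card (V - A)" using sum by linarith+
  with that AV sepA show ?thesis by blast
qed

definition middle_edge :: "'a set \<Rightarrow> 'a set set \<Rightarrow> bool" where
  "middle_edge g T \<longleftrightarrow> g \<in> T \<and> T \<subseteq> E \<and> card T = 3 \<and>
     (\<exists>f\<in>T. \<exists>h\<in>T. f \<noteq> g \<and> h \<noteq> g \<and> (\<forall>p\<in>f. \<forall>q\<in>h. separates E g p q))"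

lemma middle_edge_iff_sides:
  assumes g: "g \<in> E" and A: "A \<subseteq> V"
    and sepA: "\<And>x y. x \<in> V \<Longrightarrow> y \<in> V \<Longrightarrow> separates E g x y \<longleftrightarrow> (x \<in> A \<longleftrightarrow> y \<notin> A)"
  shows "middle_edge g T \<longleftrightarrow>
    (\<exists>f h. f \<in> {f\<in>E - {g}. f \<subseteq> A} \<and> h \<in> {h\<in>E - {g}. h \<subseteq> V - A} \<and> T = {f, g, h})"
    (is "_ \<longleftrightarrow> (\<exists>f h. f \<in> ?EA \<and> h \<in> ?EB \<and> _)")
proof
  assume "middle_edge g T"
  then obtain f h where T: "g \<in> T" "T \<subseteq> E" "card T = 3" and fh: "f \<in> T" "h \<in> T" "f \<noteq> g" "h \<noteq> g"
    and sep: "\<forall>p\<in>f. \<forall>q\<in>h. separates E g p q"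
    unfolding middle_edge_def by blast
  have fE: "f \<in> E - {g}" "h \<in> E - {g}" using fh T by auto
  obtain p q where pq: "p \<in> f" "q \<in> h" using edge_nonempty fE by blast
  have pqV: "p \<in> V" "q \<in> V" using pq fE edge_subset by blast+
  have "separates E g p q" using sep pq by blast
  then have p_q: "p \<in> A \<longleftrightarrow> q \<notin> A" using sepA[OF pqV] by simp
  have "f \<noteq> h"
  proof
    assume "f = h"
    then show False using not_separates_other_edge[OF g, of f p q] fE pq \<open>separates E g p q\<close> by blast
  qed
  then have T_eq: "T = {f, g, h}" using card_3_eq[OF T(3) fh(1) T(1) fh(2)] fh(3,4) by auto
  have f_side: "f \<subseteq> A \<or> f \<subseteq> V - A" and h_side: "h \<subseteq> A \<or> h \<subseteq> V - A"
    using edge_within_side[OF g sepA] fE by blast+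
  show "\<exists>f h. f \<in> ?EA \<and> h \<in> ?EB \<and> T = {f, g, h}"
  proof (cases "p \<in> A")
    case True
    then have "f \<in> ?EA" "h \<in> ?EB" using f_side h_side fE pq p_q by blast+
    then show ?thesis using T_eq by blast
  next
    case False
    then have "h \<in> ?EA" "f \<in> ?EB" using f_side h_side fE pq p_q by blast+
    moreover have "T = {h, g, f}" using T_eq by auto
    ultimately show ?thesis by blast
  qed
next
  assume "\<exists>f h. f \<in> ?EA \<and> h \<in> ?EB \<and> T = {f, g, h}"
  then obtain f h where fh: "f \<in> ?EA" "h \<in> ?EB" and T: "T = {f, g, h}" by blast
  have "f \<noteq> h" "f \<noteq> g" "h \<noteq> g" using fh edge_nonempty by blast+
  moreover have "\<forall>p\<in>f. \<forall>q\<in>h. separates E g p q" using fh A sepA by blast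
  ultimately show "middle_edge g T" unfolding middle_edge_def using fh g T by auto
qed

lemma card_middle_edge:
  assumes g: "g \<in> E" and A: "A \<subseteq> V"
    and sepA: "\<And>x y. x \<in> V \<Longrightarrow> y \<in> V \<Longrightarrow> separates E g x y \<longleftrightarrow> (x \<in> A \<longleftrightarrow> y \<notin> A)"
  shows "card {T. middle_edge g T} = card {f\<in>E - {g}. f \<subseteq> A} * card {h\<in>E - {g}. h \<subseteq> V - A}"
proof -
  let ?EA = "{f\<in>E - {g}. f \<subseteq> A}" and ?EB = "{h\<in>E - {g}. h \<subseteq> V - A}"
  let ?triple = "\<lambda>(f, h). {f, g, h}"
  have eq: "{T. middle_edge g T} = ?triple ` (?EA \<times> ?EB)"
    using middle_edge_iff_sides[OF assms] by (auto simp only: image_iff mem_Collect_eq)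
  have "inj_on ?triple (?EA \<times> ?EB)"
  proof (rule inj_onI)
    fix x y assume x: "x \<in> ?EA \<times> ?EB" and y: "y \<in> ?EA \<times> ?EB" and xy: "?triple x = ?triple y"
    obtain f h f' h' where x_eq: "x = (f, h)" and y_eq: "y = (f', h')" by (cases x, cases y)
    have fh: "f \<in> ?EA" "h \<in> ?EB" "f' \<in> ?EA" "h' \<in> ?EB" using x y x_eq y_eq by auto
    have "f \<noteq> h'" "f' \<noteq> h" using fh edge_nonempty by blast+
    moreover have "f \<noteq> g" "h \<noteq> g" using fh(1,2) by blast+
    moreover have "f \<in> {f', g, h'}" "h \<in> {f', g, h'}" using xy x_eq y_eq by auto
    ultimately show "x = y" using x_eq y_eq by simp
  qed
  then show ?thesis unfolding eq by (simp add: card_image card_cartesian_product)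
qed

lemma card_separated_pairs:
  assumes g: "g \<in> E"
  shows "card {(x, y). x \<in> V \<and> y \<in> V \<and> separates E g x y} = 2 * (card {T. middle_edge g T} + (card V - 1))"
proof -
  obtain A where A: "A \<subseteq> V" and sepA: "\<And>x y. x \<in> V \<Longrightarrow> y \<in> V \<Longrightarrow> separates E g x y \<longleftrightarrow> (x \<in> A \<longleftrightarrow> y \<notin> A)"
    and cA: "card {f\<in>E - {g}. f \<subseteq> A} + 1 = card A"
    and cB: "card {f\<in>E - {g}. f \<subseteq> V - A} + 1 = card (V - A)"
    using edge_cut[OF g] by blast
  have "{(x, y). x \<in> V \<and> y \<in> V \<and> separates E g x y} = A \<times> (V - A) \<union> (V - A) \<times> A"
    using sepA A by auto
  moreover have "card (A \<times> (V - A) \<union> (V - A) \<times> A) = 2 * (card A * card (V - A))"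
    using finite_subset[OF A finite_V] finite_V by (subst card_Un_disjoint) (auto simp: card_cartesian_product)
  ultimately have pairs: "card {(x, y). x \<in> V \<and> y \<in> V \<and> separates E g x y} = 2 * (card A * card (V - A))"
    by simp
  have "card A + card (V - A) = card V"
    using A finite_V by (metis card_Diff_subset card_mono le_add_diff_inverse rev_finite_subset)
  then have "card V - 1 = card {f\<in>E - {g}. f \<subseteq> A} + card {f\<in>E - {g}. f \<subseteq> V - A} + 1"
    using cA cB by simp
  then show ?thesis
    using card_middle_edge[OF g A sepA] unfolding pairs cA[symmetric] cB[symmetric] by (simp add: algebra_simps)
qed

lemma tdist_eq_card_separating:
  assumes "p \<in> V" "q \<in> V"
  shows "tdist E p q = card {g\<in>E. separates E g p q}"
proof -
  have "path_edges (tree_path E p q) = {g\<in>E. separates E g p q}"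
    using tree_path(1)[OF assms] by (auto simp: separates_def simple_path_iff)
  then show ?thesis using tdist_eq_card_tree_path[OF assms] by simp
qed

lemma sum_tdist_eq_sum_separated_pairs:
  "(\<Sum>p\<in>V. \<Sum>q\<in>V. tdist E p q) = (\<Sum>g\<in>E. card {(x, y). x \<in> V \<and> y \<in> V \<and> separates E g x y})"
proof -
  have "(\<Sum>p\<in>V. \<Sum>q\<in>V. tdist E p q) = (\<Sum>p\<in>V. \<Sum>q\<in>V. \<Sum>g\<in>E. if separates E g p q then 1 else 0)"
    using finite_E by (intro sum.cong refl) (simp add: tdist_eq_card_separating flip: sum.inter_filter)
  also have "\<dots> = (\<Sum>p\<in>V. \<Sum>g\<in>E. \<Sum>q\<in>V. if separates E g p q then 1 else 0)"
    by (intro sum.cong refl sum.swap)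
  also have "\<dots> = (\<Sum>g\<in>E. \<Sum>p\<in>V. \<Sum>q\<in>V. if separates E g p q then 1 else 0)"
    by (rule sum.swap)
  also have "\<dots> = (\<Sum>g\<in>E. card {(x, y). x \<in> V \<and> y \<in> V \<and> separates E g x y})"
    using double_sum_indicator_eq_card[OF finite_V] by simp
  finally show ?thesis .
qed

lemma wiener_eq_sum_middle_edges:
  "wiener V E = real ((card V - 1)^2 + (\<Sum>g\<in>E. card {T. middle_edge g T}))"
proof -
  have "(\<Sum>p\<in>V. \<Sum>q\<in>V. tdist E p q) = (\<Sum>g\<in>E. 2 * (card {T. middle_edge g T} + (card V - 1)))"
    unfolding sum_tdist_eq_sum_separated_pairs using card_separated_pairs by simp
  also have "\<dots> = 2 * ((card V - 1)^2 + (\<Sum>g\<in>E. card {T. middle_edge g T}))"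
  proof -
    obtain n where "card E = n" "card V - 1 = n" using card_E by simp
    then show ?thesis by (simp add: sum.distrib sum_distrib_left power2_eq_square)
  qed
  finally show ?thesis unfolding wiener_def by (simp flip: of_nat_sum)
qed

lemma nth_simple_path_in_V:
  assumes "simple_path E ps" "Suc n < length ps" "m < length ps"
  shows "ps ! m \<in> V"
proof -
  have "ps ! m \<in> set ps" using assms(3) by simp
  moreover have "set ps \<subseteq> \<Union> (path_edges ps)" using assms(2) by (intro set_subset_Union_path_edges) simp
  ultimately have "ps ! m \<in> \<Union> (path_edges ps)" by blast
  then show ?thesis using assms(1) edge_subset by (auto simp: simple_path_iff)
qed

lemma path_edge_in_E: "simple_path E ps \<Longrightarrow> Suc n < length ps \<Longrightarrow> path_edge ps n \<in> E"
  unfolding simple_path_iff path_edges_eq_image by blast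

lemma separates_hd_nth_iff:
  assumes ps: "simple_path E ps" and i: "Suc i < length ps" and j: "j < length ps"
  shows "separates E (path_edge ps i) (hd ps) (ps ! j) \<longleftrightarrow> i < j"
proof -
  have "hd (take (Suc j) ps) = hd ps" using j by (cases ps) auto
  moreover have "last (take (Suc j) ps) = ps ! j" using j by (simp add: take_Suc_conv_app_nth)
  ultimately have "tree_path E (hd ps) (ps ! j) = take (Suc j) ps"
    using simple_path_take[OF ps, of "Suc j"] by (intro tree_path_eq) simp_all
  then show ?thesis
    using path_edge_in_take_iff[OF _ i j] ps by (simp add: separates_def simple_path_iff)
qed

lemma separates_hd_path_edge_iff:
  assumes ps: "simple_path E ps" and n: "Suc n < length ps" and n': "Suc n' < length ps"
    and "n \<noteq> n'" and p: "p \<in> path_edge ps n'"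
  shows "separates E (path_edge ps n) (hd ps) p \<longleftrightarrow> n < n'"
  using p separates_hd_nth_iff[OF ps n, of n'] separates_hd_nth_iff[OF ps n, of "Suc n'"] n' \<open>n \<noteq> n'\<close>
  by (auto simp: path_edge_def)

lemma separates_path_edge_iff:
  assumes ps: "simple_path E ps" and n: "Suc n < length ps"
    and n1: "Suc n1 < length ps" "n \<noteq> n1" "p \<in> path_edge ps n1"
    and n2: "Suc n2 < length ps" "n \<noteq> n2" "q \<in> path_edge ps n2"
  shows "separates E (path_edge ps n) p q \<longleftrightarrow> ((n < n1) \<noteq> (n < n2))"
proof -
  have "0 < length ps" "hd ps = ps ! 0" using n by (cases ps; simp)+
  then have "hd ps \<in> V" using nth_simple_path_in_V[OF ps n, of 0] by simp
  moreover have "p \<in> V" "q \<in> V"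
    using nth_simple_path_in_V[OF ps n] n1 n2 by (auto simp: path_edge_def)
  ultimately show ?thesis
    using separates_iff_xor[OF path_edge_in_E[OF ps n], of p q "hd ps"]
      separates_hd_path_edge_iff[OF ps n n1] separates_hd_path_edge_iff[OF ps n n2] by simp
qed

lemma triple_on_pathE:
  assumes "T \<in> triples_on_path E"
  obtains ps i j k where "simple_path E ps" "i < j" "j < k" "Suc k < length ps"
    "T = {path_edge ps i, path_edge ps j, path_edge ps k}"
proof -
  obtain ps where T: "card T = 3" "simple_path E ps" "T \<subseteq> path_edges ps"
    using assms by (auto simp: triples_on_path_def)
  define N where "N = {n. Suc n < length ps \<and> path_edge ps n \<in> T}"
  have "inj_on (path_edge ps) N"
    using path_edge_inj T(2) by (auto simp: inj_on_def N_def simple_path_iff)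
  moreover have TN: "T = path_edge ps ` N" using T(3) by (auto simp: N_def path_edges_eq_image)
  ultimately have "card N = 3" using T(1) card_image by metis
  then obtain i j k where ijk: "i < j" "j < k" "N = {i, j, k}" by (rule card_3_sorted)
  then have "Suc k < length ps" by (auto simp: N_def)
  with that T(2) ijk TN show ?thesis by simp
qed

lemma contr_class_eq:
  assumes "z \<in> V"
  shows "contr_class V (E - T) z = {w\<in>V. \<forall>e\<in>T. \<not> separates E e z w}"
  using joined_iff_not_separates[OF assms] by (auto simp: contr_class_def edge_rel_def)

lemma contr_class_eq_iff:
  assumes T: "T \<subseteq> E" and z: "z \<in> V" "z' \<in> V"
  shows "contr_class V (E - T) z = contr_class V (E - T) z' \<longleftrightarrow> (\<forall>e\<in>T. \<not> separates E e z z')"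
proof
  assume eq: "contr_class V (E - T) z = contr_class V (E - T) z'"
  have "z' \<in> contr_class V (E - T) z'" using contr_class_eq[OF z(2), of T] z(2) by simp
  then have "z' \<in> {w\<in>V. \<forall>e\<in>T. \<not> separates E e z w}" unfolding contr_class_eq[OF z(1), symmetric] eq .
  then show "\<forall>e\<in>T. \<not> separates E e z z'" by simp
next
  assume "\<forall>e\<in>T. \<not> separates E e z z'"
  then have "separates E e z' w \<longleftrightarrow> separates E e z w" if "e \<in> T" "w \<in> V" for e w
    using separates_iff_xor[of e z' w z] T that z by auto
  then show "contr_class V (E - T) z = contr_class V (E - T) z'"
    unfolding contr_class_eq[OF z(1)] contr_class_eq[OF z(2)] by blast
qed

lemma contr_class_eq_iff_base:
  assumes T: "T \<subseteq> E" and x: "x \<in> V" and z: "z \<in> V" "z' \<in> V"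
  shows "contr_class V (E - T) z = contr_class V (E - T) z' \<longleftrightarrow>
    {e\<in>T. separates E e x z} = {e\<in>T. separates E e x z'}"
proof -
  have "separates E e z z' \<longleftrightarrow> (separates E e x z \<noteq> separates E e x z')" if "e \<in> T" for e
    using separates_iff_xor[of e z z' x] T that x z by auto
  then show ?thesis unfolding contr_class_eq_iff[OF T z] by blast
qed

lemma class_label_contr_class:
  assumes T: "T \<subseteq> E" and x: "x \<in> V" and z: "z \<in> V"
  shows "class_label E x T (contr_class V (E - T) z) = card {e\<in>T. separates E e x z}"
proof -
  have "separates E e x z" if "e \<in> T" "w \<in> contr_class V (E - T) z" "separates E e x w" for e w
  proof -
    have "w \<in> V" "\<not> separates E e z w" using that(1,2) contr_class_eq[OF z] by auto
    then show ?thesis using separates_iff_xor[of e x w z] separates_sym[OF z x] T that(1,3) x z by auto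
  qed
  moreover have "z \<in> contr_class V (E - T) z" using contr_class_eq[OF z] z by simp
  ultimately have "{e\<in>T. \<exists>w\<in>contr_class V (E - T) z. separates E e x w} = {e\<in>T. separates E e x z}"
    by blast
  then show ?thesis by (simp add: class_label_def)
qed

lemma tree_path_prefix:
  assumes x: "x \<in> V" and z: "z \<in> V" and w: "w \<in> set (tree_path E x z)"
  shows "path_edges (tree_path E x w) \<subseteq> path_edges (tree_path E x z)"
proof -
  obtain xs ys where s: "tree_path E x z = xs @ w # ys" using w by (meson split_list)
  then have take: "take (Suc (length xs)) (tree_path E x z) = xs @ [w]" by simp
  then have "simple_path E (xs @ [w])" using simple_path_take[OF tree_path(1)[OF x z]] by (metis zero_less_Suc)
  moreover have "hd (xs @ [w]) = x" using s tree_path(2)[OF x z] by (cases xs) auto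
  ultimately have "tree_path E x w = xs @ [w]" by (intro tree_path_eq) simp_all
  then show ?thesis using path_edges_take_subset[of "Suc (length xs)" "tree_path E x z"] take by simp
qed

lemma separates_hd_mono:
  assumes ps: "simple_path E ps" and n: "n1 < n2" "Suc n2 < length ps" and z: "z \<in> V"
    and sep: "separates E (path_edge ps n2) (hd ps) z"
  shows "separates E (path_edge ps n1) (hd ps) z"
proof -
  have "0 < length ps" "hd ps = ps ! 0" using n by (cases ps; simp)+
  then have xV: "hd ps \<in> V" using nth_simple_path_in_V[OF ps n(2), of 0] by simp
  have "ps ! n2 \<in> set (tree_path E (hd ps) z)"
    using sep path_edges_subset_set by (fastforce simp: separates_def path_edge_def)
  then have "path_edges (tree_path E (hd ps) (ps ! n2)) \<subseteq> path_edges (tree_path E (hd ps) z)"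
    by (rule tree_path_prefix[OF xV z])
  moreover have "separates E (path_edge ps n1) (hd ps) (ps ! n2)"
    using separates_hd_nth_iff[OF ps _ , of n1 n2] n by simp
  ultimately show ?thesis by (auto simp: separates_def)
qed

context
  fixes ps :: "'a list" and i j k :: nat and T :: "'a set set"
  assumes ps: "simple_path E ps" and ijk: "i < j" "j < k" "Suc k < length ps"
    and T: "T = {path_edge ps i, path_edge ps j, path_edge ps k}"
begin

lemma path_triple:
  "path_edge ps i \<noteq> path_edge ps j" "path_edge ps i \<noteq> path_edge ps k" "path_edge ps j \<noteq> path_edge ps k"
  "card T = 3" "T \<subseteq> E"
proof -
  have d: "distinct ps" using ps by (simp add: simple_path_iff)
  show "path_edge ps i \<noteq> path_edge ps j" "path_edge ps i \<noteq> path_edge ps k" "path_edge ps j \<noteq> path_edge ps k"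
    using path_edge_inj[OF d, of i j] path_edge_inj[OF d, of i k] path_edge_inj[OF d, of j k] ijk by simp_all
  then show "card T = 3" using T by simp
  show "T \<subseteq> E" using path_edge_in_E[OF ps] ijk T by simp
qed

lemma middle_edge_path_triple_iff: "middle_edge e T \<longleftrightarrow> e = path_edge ps j"
proof
  have index: "\<exists>n\<in>{i, j, k}. d = path_edge ps n" if "d \<in> T" for d using that T by blast
  have len: "Suc n < length ps" if "n \<in> {i, j, k}" for n using that ijk by auto
  assume "middle_edge e T"
  then obtain f h where efh: "e \<in> T" "f \<in> T" "h \<in> T" "f \<noteq> e" "h \<noteq> e"
    and sep: "\<forall>p\<in>f. \<forall>q\<in>h. separates E e p q"
    unfolding middle_edge_def by blast
  obtain n0 n1 n2 where n: "n0 \<in> {i, j, k}" "n1 \<in> {i, j, k}" "n2 \<in> {i, j, k}"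
    and e: "e = path_edge ps n0" and fh: "f = path_edge ps n1" "h = path_edge ps n2"
    using index[OF efh(1)] index[OF efh(2)] index[OF efh(3)] by blast
  have ne: "n0 \<noteq> n1" "n0 \<noteq> n2" using efh(4,5) e fh by auto
  have mem: "ps ! n1 \<in> path_edge ps n1" "ps ! n2 \<in> path_edge ps n2" by (simp_all add: path_edge_def)
  then have "separates E e (ps ! n1) (ps ! n2)" using sep fh by blast
  then have "(n0 < n1) \<noteq> (n0 < n2)"
    using separates_path_edge_iff[OF ps len[OF n(1)] len[OF n(2)] ne(1) mem(1) len[OF n(3)] ne(2) mem(2)] e
    by simp
  then have "n0 = j" using n ne ijk by auto
  then show "e = path_edge ps j" using e by simp
next
  assume e: "e = path_edge ps j"
  have "separates E (path_edge ps j) p q" if "p \<in> path_edge ps i" "q \<in> path_edge ps k" for p q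
  proof -
    have "Suc i < length ps" "Suc j < length ps" "j \<noteq> i" "j \<noteq> k" using ijk by simp_all
    then show ?thesis using separates_path_edge_iff[OF ps _ _ _ that(1) ijk(3) _ that(2)] ijk by simp
  qed
  moreover have "path_edge ps i \<in> T" "path_edge ps j \<in> T" "path_edge ps k \<in> T" using T by simp_all
  ultimately show "middle_edge e T" unfolding middle_edge_def using e path_triple by blast
qed

lemma class_label_nth:
  assumes m: "m < length ps"
  shows "class_label E (hd ps) T (contr_class V (E - T) (ps ! m))
    = (if m \<le> i then 0 else if m \<le> j then 1 else if m \<le> k then 2 else 3)"
proof -
  have "0 < length ps" "hd ps = ps ! 0" using ijk by (cases ps; simp)+
  then have xV: "hd ps \<in> V" using nth_simple_path_in_V[OF ps ijk(3)] by simp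
  have "{e\<in>T. separates E e (hd ps) (ps ! m)} = path_edge ps ` {n\<in>{i, j, k}. n < m}"
    using separates_hd_nth_iff[OF ps _ m] ijk T by auto
  also have "{n\<in>{i, j, k}. n < m} = (if m \<le> i then {} else if m \<le> j then {i} else if m \<le> k then {i, j} else {i, j, k})"
    using ijk by auto
  finally show ?thesis
    using class_label_contr_class[OF path_triple(5) xV nth_simple_path_in_V[OF ps ijk(3) m]] path_triple(1-3)
    by simp
qed

lemma separating_edges_chain:
  assumes z: "z \<in> V"
  shows "{e\<in>T. separates E e (hd ps) z} \<in> {{}, {path_edge ps i}, {path_edge ps i, path_edge ps j}, T}"
proof -
  have "separates E (path_edge ps j) (hd ps) z \<Longrightarrow> separates E (path_edge ps i) (hd ps) z"
    "separates E (path_edge ps k) (hd ps) z \<Longrightarrow> separates E (path_edge ps j) (hd ps) z"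
    using separates_hd_mono[OF ps _ _ z] ijk by simp_all
  then show ?thesis using T by auto
qed

text \<open>Label each class of the contraction by the number of edges of \<open>T\<close> separating it from
  the start of the path; the labels \<open>0, 1, 2, 3\<close> are read off along the path.\<close>
lemma path_triple_contracts: "contracts_to_P4 V E (E - T)"
proof -
  let ?x = "hd ps" and ?cl = "contr_class V (E - T)"
  let ?F = "class_label E ?x T"
  let ?edge_image = "\<lambda>e. ?F ` (?cl ` e)"
  have "0 < length ps" "hd ps = ps ! 0" using ijk by (cases ps; simp)+
  then have xV: "?x \<in> V" using nth_simple_path_in_V[OF ps ijk(3)] by simp
  have TE: "T \<subseteq> E" by (rule path_triple(5))
  have V_nth: "ps ! m \<in> V" if "m < length ps" for m using nth_simple_path_in_V[OF ps ijk(3) that] .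
  have "inj_on ?F (?cl ` V)"
  proof (rule inj_onI, clarify)
    fix z z' assume z: "z \<in> V" "z' \<in> V" and eq: "?F (?cl z) = ?F (?cl z')"
    have "{e\<in>T. separates E e ?x z} = {e\<in>T. separates E e ?x z'}"
      using card_eq_in_chain[OF separating_edges_chain[OF z(1), unfolded T]
          separating_edges_chain[OF z(2), unfolded T] path_triple(1-3)]
        eq class_label_contr_class[OF TE xV] z T by simp
    then show "?cl z = ?cl z'" using contr_class_eq_iff_base[OF TE xV z] by simp
  qed
  moreover have "?F ` (?cl ` V) = {0..3}"
  proof
    show "?F ` (?cl ` V) \<subseteq> {0..3}"
    proof clarify
      fix z assume "z \<in> V"
      moreover have "finite T" using path_triple(4) by (metis card.infinite zero_neq_numeral)
      then have "card {e\<in>T. separates E e ?x z} \<le> card T" by (intro card_mono) auto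
      then have "card {e\<in>T. separates E e ?x z} \<le> 3" using path_triple(4) by simp
      ultimately show "?F (?cl z) \<in> {0..3}" using class_label_contr_class[OF TE xV] by simp
    qed
    have image: "?F (?cl (ps ! m)) \<in> ?F ` (?cl ` V)" if "m < length ps" for m using V_nth[OF that] by blast
    have len: "0 < length ps" "Suc i < length ps" "Suc j < length ps" "Suc k < length ps"
      using ijk by linarith+
    have "?F (?cl (ps ! 0)) = 0" "?F (?cl (ps ! Suc i)) = 1"
      "?F (?cl (ps ! Suc j)) = 2" "?F (?cl (ps ! Suc k)) = 3"
      using class_label_nth[OF len(1)] class_label_nth[OF len(2)] class_label_nth[OF len(3)]
        class_label_nth[OF len(4)] ijk by simp_all
    moreover note len
    ultimately have "{0, 1, 2, 3} \<subseteq> ?F ` (?cl ` V)" using image by (metis empty_subsetI insert_subset)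
    moreover have "{0..3::nat} = {0, 1, 2, 3}" by auto
    ultimately show "{0..3} \<subseteq> ?F ` (?cl ` V)" by simp
  qed
  moreover have "bij_betw ?edge_image T P4_edges"
  proof -
    have "?edge_image (path_edge ps n) = {?F (?cl (ps ! n)), ?F (?cl (ps ! Suc n))}" for n
      by (simp add: path_edge_def)
    then have "?edge_image (path_edge ps i) = {0, 1}" "?edge_image (path_edge ps j) = {1, 2}"
      "?edge_image (path_edge ps k) = {2, 3}"
      using class_label_nth ijk by simp_all
    moreover have "{0::nat, 1} \<noteq> {1, 2}" "{0::nat, 1} \<noteq> {2, 3}" "{1::nat, 2} \<noteq> {2, 3}"
      by (auto simp: doubleton_eq_iff)
    ultimately show ?thesis
      unfolding bij_betw_def T P4_edges_def using path_triple(1-3) by simp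
  qed
  moreover have "E - (E - T) = T" using TE by blast
  ultimately show ?thesis unfolding contracts_to_P4_def bij_betw_def by auto
qed

end

lemma middle_edge_on_path:
  assumes g: "g \<in> E" and m: "middle_edge g T"
  shows "T \<in> triples_on_path E"
proof -
  obtain f h where fh: "f \<in> T" "h \<in> T" "f \<noteq> g" "h \<noteq> g" and sep: "\<forall>p\<in>f. \<forall>q\<in>h. separates E g p q"
    and T: "g \<in> T" "T \<subseteq> E" "card T = 3"
    using m unfolding middle_edge_def by blast
  have fE: "f \<in> E" "h \<in> E" using fh T by auto
  \<comment> \<open>choose the ends \<open>x \<in> f\<close>, \<open>y \<in> h\<close> so that the path from \<open>x\<close> to \<open>y\<close> uses \<open>f\<close> and \<open>h\<close> too\<close>
  have far_end: "\<exists>x\<in>d. separates E d w x" if d: "d \<in> E" and w: "w \<in> V" for d w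
  proof -
    obtain a b where ab: "d = {a, b}" "a \<noteq> b" using d by (rule edgeE)
    have "separates E d a b" using separates_edge_iff[of a b d] d ab by simp
    then show ?thesis using separates_iff_xor[OF d, of a b w] edge_subset[OF d] ab w by auto
  qed
  obtain y0 where y0: "y0 \<in> h" using edge_nonempty fE by blast
  have y0V: "y0 \<in> V" using y0 fE edge_subset by blast
  obtain x where x: "x \<in> f" "separates E f y0 x" using far_end[OF fE(1) y0V] by blast
  have xV: "x \<in> V" using x fE edge_subset by blast
  obtain y where y: "y \<in> h" "separates E h x y" using far_end[OF fE(2) xV] by blast
  have yV: "y \<in> V" using y fE edge_subset by blast
  have "\<not> separates E f y0 y" using not_separates_other_edge[OF fE(1) fE(2)] y0 y sep fh by fastforce
  then have "separates E f x y" using separates_iff_xor[OF fE(1) xV yV y0V] x by simp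
  moreover have "separates E g x y" using sep x y by blast
  moreover have "T = {f, g, h}"
    using card_3_eq[OF T(3) fh(1) T(1) fh(2)] fh(3,4) sep x y by fastforce
  ultimately have "T \<subseteq> path_edges (tree_path E x y)" using y by (auto simp: separates_def)
  then show ?thesis using tree_path(1)[OF xV yV] T unfolding triples_on_path_def by blast
qed

lemma triples_on_path_eq_Union: "triples_on_path E = (\<Union>g\<in>E. {T. middle_edge g T})"
proof
  show "triples_on_path E \<subseteq> (\<Union>g\<in>E. {T. middle_edge g T})"
  proof
    fix T assume "T \<in> triples_on_path E"
    then obtain ps i j k where "simple_path E ps" "i < j" "j < k" "Suc k < length ps"
      and T: "T = {path_edge ps i, path_edge ps j, path_edge ps k}" by (rule triple_on_pathE)
    then have "middle_edge (path_edge ps j) T" "path_edge ps j \<in> E"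
      using middle_edge_path_triple_iff path_triple(5) by auto
    then show "T \<in> (\<Union>g\<in>E. {T. middle_edge g T})" by blast
  qed
  show "(\<Union>g\<in>E. {T. middle_edge g T}) \<subseteq> triples_on_path E" using middle_edge_on_path by blast
qed

lemma middle_edge_unique:
  assumes "g \<in> E" "middle_edge g T" "middle_edge g' T"
  shows "g = g'"
proof -
  obtain ps i j k where "simple_path E ps" "i < j" "j < k" "Suc k < length ps"
    "T = {path_edge ps i, path_edge ps j, path_edge ps k}"
    using middle_edge_on_path[OF assms(1,2)] by (rule triple_on_pathE)
  from middle_edge_path_triple_iff[OF this] show ?thesis using assms(2,3) by simp
qed

lemma card_triples_on_path: "card (triples_on_path E) = (\<Sum>g\<in>E. card {T. middle_edge g T})"
proof -
  have "{T. middle_edge g T} \<subseteq> Pow E" for g by (auto simp: middle_edge_def)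
  then have "\<forall>g\<in>E. finite {T. middle_edge g T}" using finite_E by (meson finite_Pow_iff finite_subset)
  moreover have "\<forall>g\<in>E. \<forall>g'\<in>E. g \<noteq> g' \<longrightarrow> {T. middle_edge g T} \<inter> {T. middle_edge g' T} = {}"
    using middle_edge_unique by blast
  ultimately show ?thesis unfolding triples_on_path_eq_Union by (rule card_UN_disjoint[OF finite_E])
qed

lemma not_middle_edge_not_separates:
  assumes T: "T \<subseteq> E" "card T = 3" and nm: "\<not> middle_edge e T" and e: "e \<in> T"
    and f: "f \<in> T" "f \<noteq> e" and h: "h \<in> T" "h \<noteq> e" and p: "p \<in> f" and q: "q \<in> h"
  shows "\<not> separates E e p q"
proof -
  obtain p0 q0 where pq0: "p0 \<in> f" "q0 \<in> h" "\<not> separates E e p0 q0"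
    using nm e f h T unfolding middle_edge_def by blast
  have E: "e \<in> E" "f \<in> E" "h \<in> E" using T e f h by auto
  have V: "p \<in> V" "q \<in> V" "p0 \<in> V" "q0 \<in> V" using edge_subset E p q pq0 by blast+
  have "\<not> separates E e p0 p" "\<not> separates E e q0 q"
    using not_separates_other_edge[OF E(1)] E f h p q pq0 by blast+
  then show ?thesis
    using separates_iff_xor[OF E(1) V(1,2,3)] separates_iff_xor[OF E(1) V(3,2,4)] pq0(3) separates_sym[OF V(3,4)]
    by simp
qed

text \<open>If no edge of \<open>T\<close> is in the middle, each edge has an end on the side of the other two,
  and these three ends lie in one class of the contraction.\<close>
lemma off_path_triple_common_class:
  assumes T: "T \<subseteq> E" "card T = 3" and off: "T \<notin> triples_on_path E"
  obtains z where "z \<in> V" "\<forall>e\<in>T. \<exists>v\<in>e. contr_class V (E - T) v = contr_class V (E - T) z"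
proof -
  have nm: "\<not> middle_edge e T" for e
  proof
    assume m: "middle_edge e T"
    then have "e \<in> E" using T(1) by (auto simp: middle_edge_def)
    then show False using middle_edge_on_path m off by blast
  qed
  have "\<exists>z. z \<in> e \<and> (\<forall>e'\<in>T - {e}. \<forall>w\<in>e'. \<not> separates E e z w)" if e: "e \<in> T" for e
  proof -
    have eE: "e \<in> E" using e T by auto
    have "card (T - {e}) = 2" using T(2) e by (simp add: card_Diff_singleton)
    then have "T - {e} \<noteq> {}" by (metis card.empty zero_neq_numeral)
    then obtain e1 where e1: "e1 \<in> T" "e1 \<noteq> e" by blast
    obtain w1 where w1: "w1 \<in> e1" using edge_nonempty e1 T by blast
    have w1V: "w1 \<in> V" using e1 w1 T edge_subset by blast
    obtain a b where ab: "e = {a, b}" "a \<noteq> b" using eE by (rule edgeE)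
    have abV: "a \<in> V" "b \<in> V" using edge_subset[OF eE] ab by auto
    have "separates E e a b" using separates_edge_iff[of a b e] eE ab by simp
    then have "\<not> separates E e w1 a \<or> \<not> separates E e w1 b" using separates_iff_xor[OF eE abV w1V] by blast
    then obtain z where z: "z \<in> e" "\<not> separates E e w1 z" using ab by blast
    have zV: "z \<in> V" using z edge_subset[OF eE] by blast
    have "\<not> separates E e z w" if "e' \<in> T - {e}" "w \<in> e'" for e' w
    proof -
      have "w \<in> V" using that T edge_subset by blast
      moreover have "\<not> separates E e w1 w"
        using not_middle_edge_not_separates[OF T nm e e1 _ _ w1 that(2)] that(1) by blast
      ultimately show ?thesis using separates_iff_xor[OF eE zV _ w1V, of w] z(2) by simp
    qed
    then show ?thesis using z(1) by blast
  qed
  then have "\<forall>e\<in>T. \<exists>z. z \<in> e \<and> (\<forall>e'\<in>T - {e}. \<forall>w\<in>e'. \<not> separates E e z w)" by blast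
  then obtain Z where Z: "\<forall>e\<in>T. Z e \<in> e \<and> (\<forall>e'\<in>T - {e}. \<forall>w\<in>e'. \<not> separates E e (Z e) w)"
    by (rule bchoice[THEN exE])
  have ZV: "Z e \<in> V" if "e \<in> T" for e
  proof -
    have "Z e \<in> e" "e \<in> E" using Z that T(1) by blast+
    then show ?thesis using edge_subset by blast
  qed
  have no_sep: "\<not> separates E d (Z e) (Z e')" if d: "d \<in> T" and e: "e \<in> T" "e' \<in> T" for d e e'
  proof -
    consider "e = e'" | "e \<noteq> e'" "d = e" | "e \<noteq> e'" "d = e'" | "d \<noteq> e" "d \<noteq> e'" by blast
    then show ?thesis
    proof cases
      case 1
      then show ?thesis by simp
    next
      case 2
      then show ?thesis using Z e by blast
    next
      case 3
      then have "\<not> separates E d (Z e') (Z e)" using Z e by blast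
      then show ?thesis using separates_sym[OF ZV[OF e(1)] ZV[OF e(2)]] by simp
    next
      case 4
      then have "\<not> separates E d (Z d) (Z e)" "\<not> separates E d (Z d) (Z e')" using Z d e by blast+
      moreover have "d \<in> E" using d T(1) by blast
      ultimately show ?thesis using separates_iff_xor[of d "Z e" "Z e'" "Z d"] ZV d e by simp
    qed
  qed
  have "contr_class V (E - T) (Z e) = contr_class V (E - T) (Z e')" if "e \<in> T" "e' \<in> T" for e e'
    using contr_class_eq_iff[OF T(1) ZV[OF that(1)] ZV[OF that(2)]] no_sep that by blast
  moreover have "T \<noteq> {}" using T(2) by auto
  then obtain e0 where "e0 \<in> T" by blast
  ultimately show ?thesis using that[of "Z e0"] ZV Z by blast
qed

lemma contracts_to_P4_imp_on_path:
  assumes T: "T \<subseteq> E" "card T = 3" and contr: "contracts_to_P4 V E (E - T)"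
  shows "T \<in> triples_on_path E"
proof (rule ccontr)
  let ?cl = "contr_class V (E - T)"
  assume "T \<notin> triples_on_path E"
  then obtain z where z: "\<forall>e\<in>T. \<exists>v\<in>e. ?cl v = ?cl z"
    using off_path_triple_common_class[OF T] by blast
  have ET: "E - (E - T) = T" using T by blast
  have "\<exists>F. bij_betw F (?cl ` V) {0..3} \<and> bij_betw (\<lambda>e. F ` (?cl ` e)) T P4_edges"
    using contr unfolding contracts_to_P4_def ET .
  then obtain F where "bij_betw (\<lambda>e. F ` (?cl ` e)) T P4_edges" by blast
  then have F: "(\<lambda>e. F ` (?cl ` e)) ` T = P4_edges" by (simp add: bij_betw_def)
  have label: "F (?cl z) \<in> F ` (?cl ` e)" if e: "e \<in> T" for e
  proof -
    obtain v where v: "v \<in> e" "?cl v = ?cl z" using bspec[OF z e] by (rule bexE)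
    have "?cl z \<in> ?cl ` e" using image_eqI[of "?cl z" ?cl v e] v by simp
    then show ?thesis by (rule imageI)
  qed
  have "{0, 1} \<in> (\<lambda>e. F ` (?cl ` e)) ` T" "{2, 3} \<in> (\<lambda>e. F ` (?cl ` e)) ` T"
    unfolding F by (simp_all add: P4_edges_def)
  then obtain e1 e2 where "{0, 1} = F ` (?cl ` e1)" "e1 \<in> T" "{2, 3} = F ` (?cl ` e2)" "e2 \<in> T"
    by (elim imageE)
  \<comment> \<open>the label of the common class would lie in the disjoint edges \<open>{0, 1}\<close> and \<open>{2, 3}\<close> of \<open>P4\<close>\<close>
  then have "F (?cl z) \<in> {0, 1}" "F (?cl z) \<in> {2, 3}" using label by simp_all
  then show False by auto
qed

lemma card_sets_contracting_to_P4:
  assumes "4 \<le> card V"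
  shows "card {S. S \<subseteq> E \<and> card S = card V - 4 \<and> contracts_to_P4 V E S} = card (triples_on_path E)"
proof -
  let ?S = "{S. S \<subseteq> E \<and> card S = card V - 4 \<and> contracts_to_P4 V E S}"
  have card_diff: "card (E - S) = card E - card S" if "S \<subseteq> E" for S
    using card_Diff_subset[OF finite_subset[OF that finite_E] that] .
  have "bij_betw (\<lambda>T. E - T) (triples_on_path E) ?S"
  proof (rule bij_betw_byWitness[where f' = "\<lambda>S. E - S"])
    show "\<forall>T\<in>triples_on_path E. E - (E - T) = T" by (simp add: triples_on_path_def Diff_Diff_Int Int_absorb1)
    show "\<forall>S\<in>?S. E - (E - S) = S" by (simp add: Diff_Diff_Int Int_absorb1)
    show "(\<lambda>T. E - T) ` triples_on_path E \<subseteq> ?S"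
    proof clarify
      fix T assume T: "T \<in> triples_on_path E"
      then have TE: "T \<subseteq> E" "card T = 3" by (simp_all add: triples_on_path_def)
      obtain ps i j k where "simple_path E ps" "i < j" "j < k" "Suc k < length ps"
        "T = {path_edge ps i, path_edge ps j, path_edge ps k}" using T by (rule triple_on_pathE)
      then have "contracts_to_P4 V E (E - T)" by (rule path_triple_contracts)
      moreover have "card (E - T) = card V - 4" using card_diff[OF TE(1)] TE(2) card_E by simp
      ultimately show "E - T \<subseteq> E \<and> card (E - T) = card V - 4 \<and> contracts_to_P4 V E (E - T)" by blast
    qed
    show "(\<lambda>S. E - S) ` ?S \<subseteq> triples_on_path E"
    proof clarify
      fix S assume S: "S \<subseteq> E" "card S = card V - 4" "contracts_to_P4 V E S"
      have "card (E - S) = 3" using card_diff[OF S(1)] S(2) card_E assms by simp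
      moreover have "E - (E - S) = S" using S(1) by blast
      ultimately show "E - S \<in> triples_on_path E"
        using contracts_to_P4_imp_on_path[of "E - S"] S(3) by simp
    qed
  qed
  then show ?thesis by (simp add: bij_betw_same_card)
qed

end

theorem theorem4p6:
  fixes V :: "'a set" and E :: "'a set set"
  assumes "is_tree V E"
  shows "wiener V E = real ((card V - 1)^2 + card (triples_on_path E)) \<and>
         (card V \<ge> 4 \<longrightarrow> wiener V E = real ((card V - 1)^2 +
           card {S. S \<subseteq> E \<and> card S = card V - 4 \<and> contracts_to_P4 V E S}))"
proof -
  interpret tree V E by (rule tree.intro) (rule assms)
  have "wiener V E = real ((card V - 1)^2 + card (triples_on_path E))"
    using wiener_eq_sum_middle_edges card_triples_on_path by simp
  then show ?thesis using card_sets_contracting_to_P4 by simp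
qed

end
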